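(* Let $T/2<\tilde t<T$. There exist $0<\delta<\sqrt{T/2}$ depending only on $n,p,\Omega,T$ and $C>0$ depending only on $n,p,\Omega$ such that $$\sup_{0<r<\delta/\sqrt2}\beta(r)\le C\sup_{\tilde x\in\Omega}\int_{\tilde t-\delta^2}^{\tilde t}B^+_{(\tilde x,\tilde t)}(t)\,dt.$$
   Context: Standing setting: $n\ge1$, $p>1$, $\Omega\subset\mathbf{R}^n$ is a uniformly $C^{2+\alpha}$ domain ($0<\alpha<1$), possibly non-convex and unbounded, and $u$ is a classical (possibly sign-changing) solution of $u_t=\Delta u+|u|^{p-1}u$ in $\Omega\times(0,T)$, $u=0$ on $\partial\Omega\times(0,T)$, $u(\cdot,0)=u_0\in L^\infty(\Omega)$, with finite maximal existence time $T$; $\nabla u,\nabla^2u,u_t$ are continuous and bounded on $\overline\Omega\times[T_1,T_2]$ for each $0<T_1<T_2<T$. Let $K_{(\tilde x,\tilde t)}(x,t)=(\tilde t-t)^{-n/2}e^{-|x-\tilde x|^2/(4(\tilde t-t))}$, $\nu_x$ the exterior unit normal at $x\in\partial\Omega$, and $$B^\pm_{(\tilde x,\tilde t)}(t):=(\tilde t-t)^{\frac{2}{p-1}}\int_{\partial\Omega}((x-\tilde x)\cdot\nu_x)_\pm|\nabla u(x,t)|^2K_{(\tilde x,\tilde t)}(x,t)\,dS(x),\quad 0<t<\tilde t,$$ with $(\cdot)_\pm\ge0$ positive/negative parts. For $r>0$ let $B_r(\tilde x)$ be the open ball of radius $r$ centered at $\tilde x$, $\partial\Omega_r(\tilde x):=B_r(\tilde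 x)\cap\partial\Omega$, and for $0<r<\sqrt{\tilde t/2}$ $$\beta(r):=r^{\frac{2(p+1)}{p-1}-n-1}\sup_{\tilde x\in\Omega,\ \mathrm{dist}(\tilde x,\partial\Omega)<r}\int_{\tilde t-2r^2}^{\tilde t-r^2}\int_{\partial\Omega_r(\tilde x)}|\nabla u(x,t)|^2\,dS(x)\,dt.$$ *)

theory Defs
  imports "HOL-Analysis.Analysis"
begin

text \<open>Convention d^0 = 1 (also for d = 0), so that H^0 is the counting measure.\<close>
definition hpow :: "real \<Rightarrow> real \<Rightarrow> real" where
  "hpow d s = (if s = 0 then 1 else d powr s)"

definition hausdorff_pre :: "real \<Rightarrow> real \<Rightarrow> 'a::metric_space set \<Rightarrow> ennreal" where
  "hausdorff_pre s \<delta> A =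
     (INF C \<in> {C :: nat \<Rightarrow> 'a set. A \<subseteq> (\<Union>i. C i) \<and> (\<forall>i. bounded (C i) \<and> diameter (C i) \<le> \<delta>)}.
        (\<Sum>i. (if C i = {} then 0
               else ennreal (unit_ball_vol s * hpow (diameter (C i) / 2) s))))"

definition hausdorff_outer :: "real \<Rightarrow> 'a::metric_space set \<Rightarrow> ennreal" where
  "hausdorff_outer s A = (SUP \<delta> \<in> {0<..}. hausdorff_pre s \<delta> A)"

definition hausdorff_measure :: "real \<Rightarrow> 'a::euclidean_space measure" where
  "hausdorff_measure s = measure_of UNIV (sets borel) (hausdorff_outer s)"

definition surface_measure :: "'a::euclidean_space measure" where
  "surface_measure = hausdorff_measure (real (DIM('a) - 1))"

text \<open>Uniformly C^(2+alpha) domain: open, connected, nonempty, and there are r0, M > 0 such that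
  near every boundary point x0, in a rotated frame with "vertical" unit direction e,
  Omega coincides in ball x0 r0 with the supergraph of a function phi of the horizontal
  variable (phi invariant along e) with C^(2+alpha) norm bounded by M.\<close>
definition unif_C2alpha_domain :: "real \<Rightarrow> 'a::euclidean_space set \<Rightarrow> bool" where
  "unif_C2alpha_domain \<alpha> \<Omega> \<longleftrightarrow> open \<Omega> \<and> connected \<Omega> \<and> \<Omega> \<noteq> {} \<and>
     (\<exists>r0>0. \<exists>M>0. \<forall>x0\<in>frontier \<Omega>. \<exists>e \<phi> g H.
        norm e = 1 \<and>
        (\<forall>y s. \<phi> (y + s *\<^sub>R e) = \<phi> y) \<and>
        (\<forall>y. (\<phi> has_derivative (\<lambda>h. g y \<bullet> h)) (at y)) \<and>
        (\<forall>y. (g has_derivative blinfun_apply (H y)) (at y)) \<and>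
        (\<forall>y. \<bar>\<phi> y\<bar> \<le> M \<and> norm (g y) \<le> M \<and> norm (H y) \<le> M) \<and>
        (\<forall>y z. norm (H y - H z) \<le> M * norm (y - z) powr \<alpha>) \<and>
        \<Omega> \<inter> ball x0 r0 = {x \<in> ball x0 r0. (x - x0) \<bullet> e > \<phi> (x - x0)})"

definition ext_normal :: "'a::euclidean_space set \<Rightarrow> 'a \<Rightarrow> 'a" where
  "ext_normal \<Omega> x = (THE \<nu>. norm \<nu> = 1 \<and>
     (\<forall>\<epsilon>>0. \<exists>\<rho>>0. \<forall>y\<in>ball x \<rho>.
        ((y - x) \<bullet> \<nu> < - \<epsilon> * norm (y - x) \<longrightarrow> y \<in> \<Omega>) \<and>
        ((y - x) \<bullet> \<nu> > \<epsilon> * norm (y - x) \<longrightarrow> y \<notin> \<Omega>)))"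

text \<open>u is a classical solution of u_t = Lap u + |u|^(p-1) u in Omega x (0,T), u = 0 on the
  boundary, u(.,0) = u0 in L^infty, with finite maximal existence time T (blow-up in L^infty).
  gu, hu, ut are gradient, Hessian and time derivative; they are required to be continuous
  (i.e. extend continuously) and bounded on closure Omega x [T1,T2]; gu on the boundary is
  therefore the boundary trace of the gradient.\<close>
definition classical_solution ::
  "'a::euclidean_space set \<Rightarrow> real \<Rightarrow> real \<Rightarrow> ('a \<Rightarrow> real) \<Rightarrow> ('a \<Rightarrow> real \<Rightarrow> real) \<Rightarrow>
   ('a \<Rightarrow> real \<Rightarrow> 'a) \<Rightarrow> ('a \<Rightarrow> real \<Rightarrow> ('a \<Rightarrow>\<^sub>L 'a)) \<Rightarrow> ('a \<Rightarrow> real \<Rightarrow> real) \<Rightarrow> bool" where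
  "classical_solution \<Omega> p T u0 u gu hu ut \<longleftrightarrow>
     0 < T \<and>
     continuous_on (closure \<Omega> \<times> {0<..<T}) (\<lambda>z. u (fst z) (snd z)) \<and>
     (\<forall>x\<in>\<Omega>. \<forall>t\<in>{0<..<T}.
        ((\<lambda>y. u y t) has_derivative (\<lambda>h. gu x t \<bullet> h)) (at x) \<and>
        ((\<lambda>y. gu y t) has_derivative blinfun_apply (hu x t)) (at x) \<and>
        ((\<lambda>s. u x s) has_real_derivative ut x t) (at t) \<and>
        ut x t = (\<Sum>i\<in>Basis. blinfun_apply (hu x t) i \<bullet> i) + \<bar>u x t\<bar> powr (p - 1) * u x t) \<and>
     (\<forall>x\<in>frontier \<Omega>. \<forall>t\<in>{0<..<T}. u x t = 0) \<and>
     (\<forall>T1 T2. 0 < T1 \<and> T1 < T2 \<and> T2 < T \<longrightarrow>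
        continuous_on (closure \<Omega> \<times> {T1..T2}) (\<lambda>z. gu (fst z) (snd z)) \<and>
        bounded ((\<lambda>z. gu (fst z) (snd z)) ` (closure \<Omega> \<times> {T1..T2})) \<and>
        continuous_on (closure \<Omega> \<times> {T1..T2}) (\<lambda>z. hu (fst z) (snd z)) \<and>
        bounded ((\<lambda>z. hu (fst z) (snd z)) ` (closure \<Omega> \<times> {T1..T2})) \<and>
        continuous_on (closure \<Omega> \<times> {T1..T2}) (\<lambda>z. ut (fst z) (snd z)) \<and>
        bounded ((\<lambda>z. ut (fst z) (snd z)) ` (closure \<Omega> \<times> {T1..T2}))) \<and>
     u0 \<in> borel_measurable lebesgue \<and> (\<exists>M. \<forall>x\<in>\<Omega>. \<bar>u0 x\<bar> \<le> M) \<and>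
     (\<forall>K. compact K \<and> K \<subseteq> \<Omega> \<longrightarrow>
        ((\<lambda>t. \<integral>\<^sup>+ x\<in>K. ennreal \<bar>u x t - u0 x\<bar> \<partial>lborel) \<longlongrightarrow> 0) (at_right 0)) \<and>
     (\<forall>\<tau>\<in>{0<..<T}. bounded ((\<lambda>z. u (fst z) (snd z)) ` (\<Omega> \<times> {0<..\<tau>}))) \<and>
     \<not> bounded ((\<lambda>z. u (fst z) (snd z)) ` (\<Omega> \<times> {0<..<T}))"

definition heat_K :: "'a::euclidean_space \<Rightarrow> real \<Rightarrow> 'a \<Rightarrow> real \<Rightarrow> real" where
  "heat_K xt tt x t = (tt - t) powr (- real DIM('a) / 2) * exp (- (norm (x - xt))\<^sup>2 / (4 * (tt - t)))"

definition B_plus :: "'a::euclidean_space set \<Rightarrow> real \<Rightarrow> ('a \<Rightarrow> real \<Rightarrow> 'a) \<Rightarrow> 'a \<Rightarrow> real \<Rightarrow> real \<Rightarrow> ennreal" where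
  "B_plus \<Omega> p gu xt tt t = ennreal ((tt - t) powr (2 / (p - 1))) *
     (\<integral>\<^sup>+ x\<in>frontier \<Omega>. ennreal (max 0 ((x - xt) \<bullet> ext_normal \<Omega> x) * (norm (gu x t))\<^sup>2 * heat_K xt tt x t)
        \<partial>surface_measure)"

definition beta :: "'a::euclidean_space set \<Rightarrow> real \<Rightarrow> ('a \<Rightarrow> real \<Rightarrow> 'a) \<Rightarrow> real \<Rightarrow> real \<Rightarrow> ennreal" where
  "beta \<Omega> p gu tt r = ennreal (r powr (2 * (p + 1) / (p - 1) - real DIM('a) - 1)) *
     (SUP xt \<in> {x \<in> \<Omega>. infdist x (frontier \<Omega>) < r}.
        \<integral>\<^sup>+ t\<in>{tt - 2 * r\<^sup>2 .. tt - r\<^sup>2}.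
           (\<integral>\<^sup>+ x\<in>frontier \<Omega> \<inter> ball xt r. ennreal ((norm (gu x t))\<^sup>2) \<partial>surface_measure) \<partial>lborel)"

end

theory Submission
  imports Defs
begin

(* Only the geometry of the boundary enters. In a C^1 chart of uniform size around a boundary point x0, the interior point
   xh at height comparable to r above x0 sees every boundary point x within 2r of x0 at distance
   at most A r and under the normal component (x - xh) . nu_x >= c r. For r^2 <= tt - t <= 2 r^2
   the weight (tt - t)^(2/(p-1)) ((x - xh) . nu_x)_+ K_(xh,tt)(x,t) of B^+_(xh,tt)(t) is therefore
   at least a constant times r^(2(p+1)/(p-1) - n - 1) on that boundary patch, and integrating over
   [tt - 2 r^2, tt - r^2], a subinterval of [tt - delta^2, tt], gives the estimate; delta is only
   limited by T and the chart size. *)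

lemma nn_integral_cmult_le:
  "c * integral\<^sup>N M f \<le> (\<integral>\<^sup>+x. c * f x \<partial>M)"
proof -
  have "c * integral\<^sup>N M f = (SUP g \<in> {g. simple_function M g \<and> g \<le> f}. c * integral\<^sup>S M g)"
    unfolding nn_integral_def by (simp add: SUP_mult_left_ennreal)
  also have "\<dots> \<le> (\<integral>\<^sup>+x. c * f x \<partial>M)"
  proof (rule SUP_least)
    fix g assume "g \<in> {g. simple_function M g \<and> g \<le> f}"
    then have g: "simple_function M g" "g \<le> f" by auto
    have "c * integral\<^sup>S M g = integral\<^sup>N M (\<lambda>x. c * g x)"
      using g by (simp add: nn_integral_eq_simple_integral)
    also have "\<dots> \<le> (\<integral>\<^sup>+x. c * f x \<partial>M)"
      using g by (intro nn_integral_mono) (auto simp: le_fun_def intro: mult_left_mono)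
    finally show "c * integral\<^sup>S M g \<le> (\<integral>\<^sup>+x. c * f x \<partial>M)" .
  qed
  finally show ?thesis .
qed

(* Unlike nn_integral_cmult, f need not be measurable: a finite positive constant can be
   divided out again with nn_integral_cmult_le. *)
lemma nn_integral_cmult_ennreal:
  assumes "0 \<le> a"
  shows "(\<integral>\<^sup>+x. ennreal a * f x \<partial>M) = ennreal a * integral\<^sup>N M f"
proof (cases "a = 0")
  case False
  with assms have inv: "ennreal a * ennreal (inverse a) = 1"
    by (simp flip: ennreal_mult)
  have "ennreal (inverse a) * (\<integral>\<^sup>+x. ennreal a * f x \<partial>M)
      \<le> (\<integral>\<^sup>+x. ennreal (inverse a) * (ennreal a * f x) \<partial>M)"
    by (rule nn_integral_cmult_le)
  also have "\<dots> = integral\<^sup>N M f"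
    using inv by (simp add: mult.assoc[symmetric] mult.commute)
  finally have "ennreal a * (ennreal (inverse a) * (\<integral>\<^sup>+x. ennreal a * f x \<partial>M))
      \<le> ennreal a * integral\<^sup>N M f"
    by (rule mult_left_mono) simp
  then have "(\<integral>\<^sup>+x. ennreal a * f x \<partial>M) \<le> ennreal a * integral\<^sup>N M f"
    by (simp add: mult.assoc[symmetric] inv)
  then show ?thesis
    using nn_integral_cmult_le[of "ennreal a" M f] by simp
qed simp

lemma nn_set_integral_cmult_mono:
  assumes "0 \<le> a" "0 \<le> c" "A \<subseteq> B"
    and "\<And>x. x \<in> A \<Longrightarrow> ennreal a * f x \<le> ennreal c * g x"
  shows "ennreal a * (\<integral>\<^sup>+x\<in>A. f x \<partial>M) \<le> ennreal c * (\<integral>\<^sup>+x\<in>B. g x \<partial>M)"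
proof -
  have "ennreal a * (\<integral>\<^sup>+x\<in>A. f x \<partial>M) = (\<integral>\<^sup>+x. ennreal a * (f x * indicator A x) \<partial>M)"
    using assms(1) by (simp add: nn_integral_cmult_ennreal)
  also have "\<dots> \<le> (\<integral>\<^sup>+x. ennreal c * (g x * indicator B x) \<partial>M)"
    using assms(3,4) by (intro nn_integral_mono) (auto split: split_indicator)
  also have "\<dots> = ennreal c * (\<integral>\<^sup>+x\<in>B. g x \<partial>M)"
    using assms(2) by (simp add: nn_integral_cmult_ennreal)
  finally show ?thesis .
qed

definition is_ext_normal :: "'a::euclidean_space set \<Rightarrow> 'a \<Rightarrow> 'a \<Rightarrow> bool" where
  "is_ext_normal \<Omega> x \<nu> \<longleftrightarrow> norm \<nu> = 1 \<and>
     (\<forall>\<epsilon>>0. \<exists>\<rho>>0. \<forall>y\<in>ball x \<rho>.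
        ((y - x) \<bullet> \<nu> < - \<epsilon> * norm (y - x) \<longrightarrow> y \<in> \<Omega>) \<and>
        ((y - x) \<bullet> \<nu> > \<epsilon> * norm (y - x) \<longrightarrow> y \<notin> \<Omega>))"

(* Two distinct unit normals: a short step from x along their difference lies strictly
   outside the cone of the first and strictly inside the cone of the second. *)
lemma is_ext_normal_unique:
  assumes n1: "is_ext_normal \<Omega> x \<nu>1" and n2: "is_ext_normal \<Omega> x \<nu>2"
  shows "\<nu>1 = \<nu>2"
proof (rule ccontr)
  assume "\<nu>1 \<noteq> \<nu>2"
  define h where "h = \<nu>1 - \<nu>2"
  define k where "k = 1 - \<nu>1 \<bullet> \<nu>2"
  have u1: "\<nu>1 \<bullet> \<nu>1 = 1" and u2: "\<nu>2 \<bullet> \<nu>2 = 1"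
    using n1 n2 unfolding is_ext_normal_def by (simp_all add: dot_square_norm)
  have nh: "norm h > 0" using \<open>\<nu>1 \<noteq> \<nu>2\<close> by (simp add: h_def)
  have "(norm h)\<^sup>2 = 2 * k"
    using u1 u2 by (simp add: power2_norm_eq_inner h_def k_def inner_diff_left inner_diff_right inner_commute)
  with nh have kpos: "k > 0" by (smt (verit) zero_less_power)
  have h1: "h \<bullet> \<nu>1 = k" and h2: "h \<bullet> \<nu>2 = - k"
    using u1 u2 by (simp_all add: h_def k_def inner_diff_left inner_diff_right inner_commute)
  define \<epsilon> where "\<epsilon> = k / (2 * norm h)"
  have "\<epsilon> > 0" using kpos nh by (simp add: \<epsilon>_def)
  then obtain \<rho>1 where "\<rho>1 > 0"
    and out: "\<forall>y\<in>ball x \<rho>1. (y - x) \<bullet> \<nu>1 > \<epsilon> * norm (y - x) \<longrightarrow> y \<notin> \<Omega>"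
    using n1 unfolding is_ext_normal_def by meson
  obtain \<rho>2 where "\<rho>2 > 0"
    and inn: "\<forall>y\<in>ball x \<rho>2. (y - x) \<bullet> \<nu>2 < - \<epsilon> * norm (y - x) \<longrightarrow> y \<in> \<Omega>"
    using n2 \<open>\<epsilon> > 0\<close> unfolding is_ext_normal_def by meson
  define s where "s = min \<rho>1 \<rho>2 / (2 * norm h)"
  define y where "y = x + s *\<^sub>R h"
  have sp: "s > 0" using \<open>\<rho>1 > 0\<close> \<open>\<rho>2 > 0\<close> nh by (simp add: s_def)
  have "norm (y - x) = min \<rho>1 \<rho>2 / 2"
    using \<open>\<rho>1 > 0\<close> \<open>\<rho>2 > 0\<close> nh by (simp add: y_def s_def)
  then have "y \<in> ball x \<rho>1" "y \<in> ball x \<rho>2"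
    using \<open>\<rho>1 > 0\<close> \<open>\<rho>2 > 0\<close> by (auto simp: dist_norm norm_minus_commute)
  moreover have "\<epsilon> * norm (y - x) < (y - x) \<bullet> \<nu>1" "(y - x) \<bullet> \<nu>2 < - \<epsilon> * norm (y - x)"
  proof -
    have "\<epsilon> * norm (y - x) = s * k / 2" using sp nh by (simp add: y_def \<epsilon>_def)
    moreover have "(y - x) \<bullet> \<nu>1 = s * k" "(y - x) \<bullet> \<nu>2 = - (s * k)"
      using h1 h2 by (simp_all add: y_def)
    moreover have "s * k > 0" using sp kpos by simp
    ultimately show "\<epsilon> * norm (y - x) < (y - x) \<bullet> \<nu>1" "(y - x) \<bullet> \<nu>2 < - \<epsilon> * norm (y - x)"
      by linarith+
  qed
  ultimately show False
    using out inn by blast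
qed

lemma ext_normal_eqI: "is_ext_normal \<Omega> x \<nu> \<Longrightarrow> ext_normal \<Omega> x = \<nu>"
  unfolding ext_normal_def
  by (rule the_equality) (use is_ext_normal_unique in \<open>auto simp: is_ext_normal_def\<close>)

locale supergraph_chart =
  fixes \<Omega> :: "'a::euclidean_space set" and x0 :: 'a and r0 M :: real
    and e :: 'a and \<phi> :: "'a \<Rightarrow> real" and g :: "'a \<Rightarrow> 'a"
  assumes open_domain: "open \<Omega>"
    and unit_direction: "norm e = 1"
    and invariant: "\<And>y s. \<phi> (y + s *\<^sub>R e) = \<phi> y"
    and has_gradient: "\<And>y. (\<phi> has_derivative (\<lambda>h. g y \<bullet> h)) (at y)"
    and gradient_bound: "\<And>y. norm (g y) \<le> M"
    and chart: "\<Omega> \<inter> ball x0 r0 = {x \<in> ball x0 r0. (x - x0) \<bullet> e > \<phi> (x - x0)}"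
    and center_frontier: "x0 \<in> frontier \<Omega>"
begin

lemma mem_chart_iff: "y \<in> ball x0 r0 \<Longrightarrow> y \<in> \<Omega> \<longleftrightarrow> (y - x0) \<bullet> e > \<phi> (y - x0)"
  using chart by blast

lemma gradient_orthogonal: "g y \<bullet> e = 0"
proof -
  have "((\<lambda>s::real. y + s *\<^sub>R e) has_derivative (\<lambda>s. s *\<^sub>R e)) (at 0)"
    by (auto intro!: derivative_eq_intros)
  moreover have "(\<phi> has_derivative (\<lambda>h. g y \<bullet> h)) (at ((\<lambda>s::real. y + s *\<^sub>R e) 0))"
    using has_gradient by simp
  ultimately have "((\<lambda>s. \<phi> (y + s *\<^sub>R e)) has_derivative (\<lambda>s. g y \<bullet> (s *\<^sub>R e))) (at 0)"
    using has_derivative_compose by fastforce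
  moreover have "((\<lambda>s::real. \<phi> (y + s *\<^sub>R e)) has_derivative (\<lambda>s. 0)) (at 0)"
    by (simp add: invariant)
  ultimately have "(\<lambda>s::real. g y \<bullet> (s *\<^sub>R e)) = (\<lambda>s. 0)"
    by (rule has_derivative_unique)
  then show ?thesis by (metis inner_scaleR_right mult_1)
qed

lemma continuous_on_chart_function: "continuous_on UNIV \<phi>"
  by (meson continuous_at_imp_continuous_on has_derivative_continuous has_gradient)

lemma frontier_on_graph:
  assumes "x \<in> frontier \<Omega>" "x \<in> ball x0 r0"
  shows "(x - x0) \<bullet> e = \<phi> (x - x0)"
proof -
  have "x \<notin> \<Omega>" using assms(1) open_domain by (simp add: frontier_def interior_open)
  then have "\<not> (x - x0) \<bullet> e > \<phi> (x - x0)" using mem_chart_iff assms(2) by blast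
  moreover have "\<not> (x - x0) \<bullet> e < \<phi> (x - x0)"
  proof
    define U where "U = ball x0 r0 \<inter> {y. (y - x0) \<bullet> e < \<phi> (y - x0)}"
    assume "(x - x0) \<bullet> e < \<phi> (x - x0)"
    then have "x \<in> U" using assms(2) by (simp add: U_def)
    have "continuous_on UNIV (\<lambda>y. \<phi> (y - x0))"
      by (rule continuous_on_compose2[OF continuous_on_chart_function]) (auto intro!: continuous_intros)
    then have "open U"
      unfolding U_def by (intro open_Int open_Collect_less) (auto intro!: continuous_intros)
    moreover have "U \<inter> \<Omega> = {}" using mem_chart_iff by (auto simp: U_def)
    ultimately have "U \<inter> closure \<Omega> = {}" using open_Int_closure_eq_empty by blast
    then show False using \<open>x \<in> U\<close> assms(1) by (auto simp: frontier_def)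
  qed
  ultimately show ?thesis by linarith
qed

lemma chart_first_order:
  assumes x: "(x - x0) \<bullet> e = \<phi> (x - x0)" and "0 < \<eta>"
  obtains d where "0 < d" "\<And>y. norm (y - x) < d \<Longrightarrow>
    \<bar>(y - x0) \<bullet> e - \<phi> (y - x0) + (g (x - x0) - e) \<bullet> (y - x)\<bar> \<le> \<eta> * norm (y - x)"
proof -
  define w where "w = x - x0"
  obtain d where "0 < d" and d: "\<And>z. norm (z - w) < d \<Longrightarrow>
      norm (\<phi> z - \<phi> w - g w \<bullet> (z - w)) \<le> \<eta> * norm (z - w)"
    using has_gradient[of w] \<open>0 < \<eta>\<close> unfolding has_derivative_at_alt by blast
  have "\<bar>(y - x0) \<bullet> e - \<phi> (y - x0) + (g w - e) \<bullet> (y - x)\<bar> \<le> \<eta> * norm (y - x)"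
    if "norm (y - x) < d" for y
  proof -
    have "w \<bullet> e = \<phi> w" using x by (simp add: w_def)
    then have expand: "(w + h) \<bullet> e - \<phi> (w + h) + (g w - e) \<bullet> h = - (\<phi> (w + h) - \<phi> w - g w \<bullet> h)"
      for h by (simp add: inner_add_left inner_add_right inner_diff_left inner_diff_right inner_commute)
    have "y - x0 = w + (y - x)" by (simp add: w_def)
    then have "(y - x0) \<bullet> e - \<phi> (y - x0) + (g w - e) \<bullet> (y - x)
        = - (\<phi> (w + (y - x)) - \<phi> w - g w \<bullet> (y - x))"
      by (simp only: expand)
    then show ?thesis using d[of "w + (y - x)"] that by (simp add: abs_minus_commute)
  qed
  then show thesis using that \<open>0 < d\<close> by (simp add: w_def)
qed

(* By chart_first_order, near x the chart inequality is decided by the sign of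
   (y - x) \<bullet> (g (x - x0) - e), up to an error small against norm (y - x). *)
lemma is_ext_normal_graph:
  assumes x: "x \<in> ball x0 r0" "(x - x0) \<bullet> e = \<phi> (x - x0)"
  shows "is_ext_normal \<Omega> x (sgn (g (x - x0) - e))"
proof -
  define D where "D = norm (g (x - x0) - e)"
  define \<nu> where "\<nu> = sgn (g (x - x0) - e)"
  have "g (x - x0) \<noteq> e"
    using gradient_orthogonal[of "x - x0"] unit_direction by (auto simp: dot_square_norm)
  then have "D > 0" by (simp add: D_def)
  have D\<nu>: "(g (x - x0) - e) \<bullet> h = D * (h \<bullet> \<nu>)" for h
    using \<open>D > 0\<close> by (simp add: \<nu>_def D_def sgn_div_norm inner_commute)
  have "\<exists>\<rho>>0. \<forall>y\<in>ball x \<rho>.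
          ((y - x) \<bullet> \<nu> < - \<epsilon> * norm (y - x) \<longrightarrow> y \<in> \<Omega>) \<and>
          ((y - x) \<bullet> \<nu> > \<epsilon> * norm (y - x) \<longrightarrow> y \<notin> \<Omega>)" if "\<epsilon> > 0" for \<epsilon>
  proof -
    have "0 < \<epsilon> * D / 2" using \<open>\<epsilon> > 0\<close> \<open>D > 0\<close> by simp
    with chart_first_order[OF x(2)] obtain d where "0 < d" and d: "\<And>y. norm (y - x) < d \<Longrightarrow>
        \<bar>(y - x0) \<bullet> e - \<phi> (y - x0) + (g (x - x0) - e) \<bullet> (y - x)\<bar> \<le> \<epsilon> * D / 2 * norm (y - x)"
      by blast
    define \<rho> where "\<rho> = min d (r0 - dist x0 x)"
    have "\<rho> > 0" using \<open>d > 0\<close> x(1) by (simp add: \<rho>_def)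
    moreover have "((y - x) \<bullet> \<nu> < - \<epsilon> * norm (y - x) \<longrightarrow> y \<in> \<Omega>) \<and>
          ((y - x) \<bullet> \<nu> > \<epsilon> * norm (y - x) \<longrightarrow> y \<notin> \<Omega>)" if y: "y \<in> ball x \<rho>" for y
    proof -
      define h where "h = y - x"
      have "y \<in> ball x0 r0"
        using y dist_triangle[of x0 y x] by (simp add: \<rho>_def dist_commute)
      moreover have "norm h < d" using y by (simp add: \<rho>_def h_def dist_norm norm_minus_commute)
      then have approx: "\<bar>(y - x0) \<bullet> e - \<phi> (y - x0) + D * (h \<bullet> \<nu>)\<bar> \<le> D * (\<epsilon> * norm h) / 2"
        using d[of y] by (simp add: h_def D\<nu> mult_ac)
      ultimately show ?thesis
        unfolding h_def[symmetric]
      proof (intro conjI impI)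
        assume "y \<in> ball x0 r0" and "h \<bullet> \<nu> < - \<epsilon> * norm h"
        moreover from this have "h \<noteq> 0" using \<open>\<epsilon> > 0\<close> by auto
        ultimately have "D * (h \<bullet> \<nu>) < - (D * (\<epsilon> * norm h))" "D * (\<epsilon> * norm h) > 0"
          using mult_strict_left_mono[OF _ \<open>D > 0\<close>] \<open>D > 0\<close> \<open>\<epsilon> > 0\<close> by fastforce+
        then show "y \<in> \<Omega>" using approx mem_chart_iff[OF \<open>y \<in> ball x0 r0\<close>] by linarith
      next
        assume "y \<in> ball x0 r0" and "h \<bullet> \<nu> > \<epsilon> * norm h"
        then have "D * (h \<bullet> \<nu>) > D * (\<epsilon> * norm h)" "D * (\<epsilon> * norm h) \<ge> 0"
          using mult_strict_left_mono[OF _ \<open>D > 0\<close>] \<open>D > 0\<close> \<open>\<epsilon> > 0\<close> by auto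
        then show "y \<notin> \<Omega>" using approx mem_chart_iff[OF \<open>y \<in> ball x0 r0\<close>] by linarith
      qed
    qed
    ultimately show ?thesis by blast
  qed
  moreover have "norm \<nu> = 1" using \<open>D > 0\<close> by (simp add: \<nu>_def D_def norm_sgn)
  ultimately show ?thesis unfolding is_ext_normal_def \<nu>_def by blast
qed

lemma nonneg_gradient_bound: "0 \<le> M"
  using gradient_bound[of 0] norm_ge_zero order_trans by blast

lemma ext_normal_on_frontier:
  assumes "x \<in> frontier \<Omega>" "x \<in> ball x0 r0"
  shows "ext_normal \<Omega> x = sgn (g (x - x0) - e)"
  using assms by (intro ext_normal_eqI is_ext_normal_graph frontier_on_graph)

definition viewpoint :: "real \<Rightarrow> 'a" where
  "viewpoint r = x0 + ((2 * M + 3) * r) *\<^sub>R e"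

lemma viewpoint_in_domain:
  assumes "0 < r" "(2 * M + 3) * r < r0"
  shows "viewpoint r \<in> \<Omega>"
proof -
  have "0 < (2 * M + 3) * r" using assms nonneg_gradient_bound by simp
  moreover from this have "\<phi> (((2 * M + 3) * r) *\<^sub>R e) = 0"
    using frontier_on_graph[OF center_frontier] invariant[of 0] assms(2) by simp
  ultimately show ?thesis
    using assms unit_direction by (simp add: mem_chart_iff viewpoint_def dist_norm dot_square_norm)
qed

lemma viewpoint_sees_frontier:
  assumes r: "0 < r" "2 * r \<le> r0" and x: "x \<in> frontier \<Omega>" "x \<in> ball x0 (2 * r)"
  shows "norm (x - viewpoint r) \<le> (2 * M + 5) * r \<and> r / (1 + M) \<le> (x - viewpoint r) \<bullet> ext_normal \<Omega> x"
proof
  define a where "a = (2 * M + 3) * r"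
  define w where "w = x - x0"
  define D where "D = norm (g w - e)"
  have "0 \<le> M" by (rule nonneg_gradient_bound)
  have ee: "e \<bullet> e = 1" using unit_direction by (simp add: dot_square_norm)
  have w: "norm w < 2 * r" using x by (simp add: w_def dist_norm norm_minus_commute)
  have xxh: "x - viewpoint r = w - a *\<^sub>R e" by (simp add: viewpoint_def a_def w_def)
  then have "norm (x - viewpoint r) \<le> norm w + a"
    using norm_triangle_ineq4[of w "a *\<^sub>R e"] r \<open>0 \<le> M\<close> unit_direction by (simp add: a_def)
  then show "norm (x - viewpoint r) \<le> (2 * M + 5) * r" using w by (simp add: a_def algebra_simps)
  have "\<bar>w \<bullet> g w\<bar> \<le> norm w * norm (g w)" by (rule Cauchy_Schwarz_ineq2)
  also have "\<dots> \<le> 2 * r * M" using w r gradient_bound[of w] by (intro mult_mono) auto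
  finally have "w \<bullet> g w \<ge> - (2 * r * M)" by linarith
  moreover have "w \<bullet> e \<le> 2 * r"
    using Cauchy_Schwarz_ineq2[of w e] w unit_direction by simp
  moreover have "(x - viewpoint r) \<bullet> (g w - e) = w \<bullet> g w - w \<bullet> e + a"
    unfolding xxh using gradient_orthogonal[of w] ee
    by (simp add: inner_diff_left inner_diff_right inner_commute)
  ultimately have pairing: "r \<le> (x - viewpoint r) \<bullet> (g w - e)" by (simp add: a_def algebra_simps)
  have "g w \<noteq> e" using gradient_orthogonal[of w] ee by auto
  then have "0 < D" by (simp add: D_def)
  moreover have "D \<le> 1 + M"
    using norm_triangle_ineq4[of "g w" e] gradient_bound[of w] unit_direction by (simp add: D_def)
  ultimately have "r / (1 + M) \<le> r / D" using r by (intro divide_left_mono) auto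
  also have "\<dots> \<le> (x - viewpoint r) \<bullet> ext_normal \<Omega> x"
  proof -
    have "x \<in> ball x0 r0" using w r by (simp add: w_def dist_norm norm_minus_commute)
    then have "ext_normal \<Omega> x = (1 / D) *\<^sub>R (g w - e)"
      using x ext_normal_on_frontier by (simp add: w_def D_def sgn_div_norm divide_inverse_commute)
    then show ?thesis using pairing \<open>0 < D\<close> by (simp add: divide_right_mono)
  qed
  finally show "r / (1 + M) \<le> (x - viewpoint r) \<bullet> ext_normal \<Omega> x" .
qed

end

definition boundary_visible_at_scale :: "'a::euclidean_space set \<Rightarrow> real \<Rightarrow> real \<Rightarrow> real \<Rightarrow> bool" where
  "boundary_visible_at_scale \<Omega> A c r \<longleftrightarrow>
     (\<forall>x0\<in>frontier \<Omega>. \<exists>xh\<in>\<Omega>. \<forall>x\<in>frontier \<Omega> \<inter> ball x0 (2 * r).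
        norm (x - xh) \<le> A * r \<and> c * r \<le> (x - xh) \<bullet> ext_normal \<Omega> x)"

lemma unif_C2alpha_domain_boundary_visible:
  assumes "unif_C2alpha_domain \<alpha> \<Omega>"
  obtains r0 M where "0 < r0" "0 \<le> M"
    "\<And>r. 0 < r \<Longrightarrow> (2 * M + 5) * r < r0 \<Longrightarrow> boundary_visible_at_scale \<Omega> (2 * M + 5) (1 / (1 + M)) r"
proof -
  obtain r0 M where "0 < r0" "0 < M" and charts: "\<forall>x0\<in>frontier \<Omega>. \<exists>e \<phi> g H.
        norm e = 1 \<and> (\<forall>y s. \<phi> (y + s *\<^sub>R e) = \<phi> y) \<and>
        (\<forall>y. (\<phi> has_derivative (\<lambda>h. g y \<bullet> h)) (at y)) \<and>
        (\<forall>y. (g has_derivative blinfun_apply (H y)) (at y)) \<and>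
        (\<forall>y. \<bar>\<phi> y\<bar> \<le> M \<and> norm (g y) \<le> M \<and> norm (H y) \<le> M) \<and>
        (\<forall>y z. norm (H y - H z) \<le> M * norm (y - z) powr \<alpha>) \<and>
        \<Omega> \<inter> ball x0 r0 = {x \<in> ball x0 r0. (x - x0) \<bullet> e > \<phi> (x - x0)}"
    and "open \<Omega>"
    using assms unfolding unif_C2alpha_domain_def by blast
  have visible: "boundary_visible_at_scale \<Omega> (2 * M + 5) (1 / (1 + M)) r"
    if "0 < r" "(2 * M + 5) * r < r0" for r
    unfolding boundary_visible_at_scale_def
  proof
    fix x0 assume "x0 \<in> frontier \<Omega>"
    obtain e \<phi> g where "norm e = 1" "\<forall>y s. \<phi> (y + s *\<^sub>R e) = \<phi> y"
        "\<forall>y. (\<phi> has_derivative (\<lambda>h. g y \<bullet> h)) (at y)" "\<forall>y. norm (g y) \<le> M"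
        "\<Omega> \<inter> ball x0 r0 = {x \<in> ball x0 r0. (x - x0) \<bullet> e > \<phi> (x - x0)}"
      using bspec[OF charts \<open>x0 \<in> frontier \<Omega>\<close>] by (elim exE conjE) blast
    with \<open>open \<Omega>\<close> \<open>x0 \<in> frontier \<Omega>\<close> interpret supergraph_chart \<Omega> x0 r0 M e \<phi> g
      by unfold_locales auto
    have "0 \<le> M * r" using that \<open>0 < M\<close> by simp
    then have "(2 * M + 3) * r < r0" "2 * r \<le> r0" using that by (simp_all add: algebra_simps)
    then show "\<exists>xh\<in>\<Omega>. \<forall>x\<in>frontier \<Omega> \<inter> ball x0 (2 * r).
        norm (x - xh) \<le> (2 * M + 5) * r \<and> 1 / (1 + M) * r \<le> (x - xh) \<bullet> ext_normal \<Omega> x"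
      using viewpoint_in_domain viewpoint_sees_frontier \<open>0 < r\<close> by (auto intro!: bexI[of _ "viewpoint r"])
  qed
  show thesis
    by (rule that[OF \<open>0 < r0\<close> less_imp_le[OF \<open>0 < M\<close>] visible])
qed

lemma heat_weight_lower_bound:
  fixes r s q N A c d m :: real
  assumes r: "0 < r" "r\<^sup>2 \<le> s" "s \<le> 2 * r\<^sup>2" and "0 \<le> q" "0 \<le> N"
    and d: "0 \<le> d" "d \<le> A * r" and c: "0 < c" "c * r \<le> m"
  shows "r powr (2 * q + 1 - N)
           \<le> (2 powr (N / 2) * exp (A\<^sup>2 / 4) / c) *
             (s powr q * (max 0 m * s powr (- N / 2) * exp (- d\<^sup>2 / (4 * s))))"
proof -
  have "s > 0" using r by (smt (verit) zero_less_power)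
  have r2: "r\<^sup>2 = r powr 2" using r by (simp add: powr_numeral)
  have "r powr (2 * q) = (r\<^sup>2) powr q" by (simp add: r2 powr_powr)
  also have "\<dots> \<le> s powr q" using r \<open>0 \<le> q\<close> by (intro powr_mono2) auto
  finally have time: "r powr (2 * q) \<le> s powr q" .
  have "(r\<^sup>2) powr (- N / 2) = r powr (- N)" by (simp add: r2 powr_powr)
  then have "2 powr (- N / 2) * r powr (- N) = (2 * r\<^sup>2) powr (- N / 2)"
    by (simp add: powr_mult)
  also have "\<dots> \<le> s powr (- N / 2)" using r \<open>0 \<le> N\<close> \<open>s > 0\<close> by (intro powr_mono2') auto
  finally have scale: "2 powr (- N / 2) * r powr (- N) \<le> s powr (- N / 2)" .
  have "d\<^sup>2 \<le> A\<^sup>2 * r\<^sup>2" using d power_mono[of d "A * r" 2] by (simp add: power_mult_distrib)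
  also have "\<dots> \<le> A\<^sup>2 * s" using r by (intro mult_left_mono) auto
  finally have gauss: "exp (- (A\<^sup>2 / 4)) \<le> exp (- d\<^sup>2 / (4 * s))"
    using \<open>s > 0\<close> by (simp add: divide_simps)
  define K where "K = 2 powr (N / 2) * exp (A\<^sup>2 / 4)"
  have "K > 0" by (simp add: K_def)
  define X where "X = r powr (2 * q + 1 - N)"
  define R where "R = s powr q * (max 0 m * s powr (- N / 2) * exp (- d\<^sup>2 / (4 * s)))"
  have "r powr (2 * q + 1 - N) = r powr (2 * q) * r powr 1 * r powr (- N)"
    by (simp only: powr_add[symmetric] diff_conv_add_uminus)
  then have eq: "r powr (2 * q) * (c * r * (2 powr (- N / 2) * r powr (- N)) * exp (- (A\<^sup>2 / 4)))
      = c / K * X"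
    using r by (simp add: X_def K_def exp_minus powr_minus field_simps)
  have "r powr (2 * q) * (c * r * (2 powr (- N / 2) * r powr (- N)) * exp (- (A\<^sup>2 / 4))) \<le> R"
    unfolding R_def using time scale gauss r c by (intro mult_mono) auto
  then have "c / K * X \<le> R" unfolding eq .
  then have "K / c * (c / K * X) \<le> K / c * R"
    using \<open>K > 0\<close> c by (intro mult_left_mono) auto
  then show ?thesis using \<open>K > 0\<close> c unfolding X_def R_def K_def by simp
qed

lemma boundary_integral_le_B_plus:
  fixes \<Omega> :: "'a::euclidean_space set"
  assumes "1 < p" "0 < r" "r\<^sup>2 \<le> tt - t" "tt - t \<le> 2 * r\<^sup>2" "0 < c"
    and near: "\<And>x. x \<in> frontier \<Omega> \<inter> ball xt r \<Longrightarrow>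
                 norm (x - xh) \<le> A * r \<and> c * r \<le> (x - xh) \<bullet> ext_normal \<Omega> x"
  shows "ennreal (r powr (2 * (p + 1) / (p - 1) - real DIM('a) - 1)) *
           (\<integral>\<^sup>+x\<in>frontier \<Omega> \<inter> ball xt r. ennreal ((norm (gu x t))\<^sup>2) \<partial>surface_measure)
         \<le> ennreal (2 powr (real DIM('a) / 2) * exp (A\<^sup>2 / 4) / c) * B_plus \<Omega> p gu xh tt t"
proof -
  define N where "N = real DIM('a)"
  define q where "q = 2 / (p - 1)"
  define K where "K = 2 powr (N / 2) * exp (A\<^sup>2 / 4) / c"
  have "K > 0" using \<open>0 < c\<close> by (simp add: K_def)
  have E: "2 * (p + 1) / (p - 1) - N - 1 = 2 * q + 1 - N"
    using \<open>1 < p\<close> by (simp add: q_def field_simps)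
  have "ennreal (r powr (2 * q + 1 - N)) *
          (\<integral>\<^sup>+x\<in>frontier \<Omega> \<inter> ball xt r. ennreal ((norm (gu x t))\<^sup>2) \<partial>surface_measure)
        \<le> ennreal (K * (tt - t) powr q) *
          (\<integral>\<^sup>+x\<in>frontier \<Omega>. ennreal (max 0 ((x - xh) \<bullet> ext_normal \<Omega> x) * (norm (gu x t))\<^sup>2 *
             heat_K xh tt x t) \<partial>surface_measure)"
  proof (rule nn_set_integral_cmult_mono)
    fix x assume x: "x \<in> frontier \<Omega> \<inter> ball xt r"
    have "r powr (2 * q + 1 - N) \<le> K * ((tt - t) powr q *
            (max 0 ((x - xh) \<bullet> ext_normal \<Omega> x) * (tt - t) powr (- N / 2) *
             exp (- (norm (x - xh))\<^sup>2 / (4 * (tt - t)))))"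
      unfolding K_def using near[OF x] assms
      by (intro heat_weight_lower_bound) (auto simp: q_def N_def)
    then have "r powr (2 * q + 1 - N) * (norm (gu x t))\<^sup>2 \<le> K * ((tt - t) powr q *
            (max 0 ((x - xh) \<bullet> ext_normal \<Omega> x) * (tt - t) powr (- N / 2) *
             exp (- (norm (x - xh))\<^sup>2 / (4 * (tt - t))))) * (norm (gu x t))\<^sup>2"
      by (rule mult_right_mono) simp
    also have "\<dots> = K * (tt - t) powr q *
        (max 0 ((x - xh) \<bullet> ext_normal \<Omega> x) * (norm (gu x t))\<^sup>2 * heat_K xh tt x t)"
      by (simp add: heat_K_def N_def mult_ac)
    finally
    show "ennreal (r powr (2 * q + 1 - N)) * ennreal ((norm (gu x t))\<^sup>2)
        \<le> ennreal (K * (tt - t) powr q) * ennreal (max 0 ((x - xh) \<bullet> ext_normal \<Omega> x) *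
             (norm (gu x t))\<^sup>2 * heat_K xh tt x t)"
      using \<open>K > 0\<close> by (simp add: ennreal_mult[symmetric] ennreal_leI heat_K_def)
  qed (use \<open>K > 0\<close> in auto)
  also have "\<dots> = ennreal K * B_plus \<Omega> p gu xh tt t"
    unfolding B_plus_def q_def using \<open>K > 0\<close> by (simp add: ennreal_mult mult.assoc)
  finally show ?thesis
    unfolding N_def[symmetric] E K_def[symmetric] .
qed

lemma beta_le_B_plus_integral:
  fixes \<Omega> :: "'a::euclidean_space set"
  assumes "1 < p" "0 < r" "2 * r\<^sup>2 \<le> \<delta>\<^sup>2" "0 < c" and visible: "boundary_visible_at_scale \<Omega> A c r"
  shows "beta \<Omega> p gu tt r \<le> ennreal (2 powr (real DIM('a) / 2) * exp (A\<^sup>2 / 4) / c) *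
           (SUP xt\<in>\<Omega>. \<integral>\<^sup>+ t\<in>{tt - \<delta>\<^sup>2 .. tt}. B_plus \<Omega> p gu xt tt t \<partial>lborel)"
proof -
  define K where "K = 2 powr (real DIM('a) / 2) * exp (A\<^sup>2 / 4) / c"
  define E where "E = 2 * (p + 1) / (p - 1) - real DIM('a) - 1"
  have "K > 0" using \<open>0 < c\<close> by (simp add: K_def)
  have "ennreal (r powr E) * (\<integral>\<^sup>+ t\<in>{tt - 2 * r\<^sup>2 .. tt - r\<^sup>2}.
          (\<integral>\<^sup>+ x\<in>frontier \<Omega> \<inter> ball xt r. ennreal ((norm (gu x t))\<^sup>2) \<partial>surface_measure) \<partial>lborel)
        \<le> ennreal K * (SUP xt\<in>\<Omega>. \<integral>\<^sup>+ t\<in>{tt - \<delta>\<^sup>2 .. tt}. B_plus \<Omega> p gu xt tt t \<partial>lborel)"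
    for xt
  proof (cases "frontier \<Omega> \<inter> ball xt r = {}")
    case False
    then obtain x0 where "x0 \<in> frontier \<Omega>" "dist xt x0 < r" by auto
    with visible obtain xh where "xh \<in> \<Omega>" and xh: "\<forall>x\<in>frontier \<Omega> \<inter> ball x0 (2 * r).
        norm (x - xh) \<le> A * r \<and> c * r \<le> (x - xh) \<bullet> ext_normal \<Omega> x"
      unfolding boundary_visible_at_scale_def by blast
    have "ball xt r \<subseteq> ball x0 (2 * r)"
    proof
      fix x assume "x \<in> ball xt r"
      moreover have "dist x0 x \<le> dist x0 xt + dist xt x" by (rule dist_triangle)
      ultimately show "x \<in> ball x0 (2 * r)"
        using \<open>dist xt x0 < r\<close> by (simp add: dist_commute[of x0 xt])
    qed
    with xh have near: "x \<in> frontier \<Omega> \<inter> ball xt r \<Longrightarrow>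
        norm (x - xh) \<le> A * r \<and> c * r \<le> (x - xh) \<bullet> ext_normal \<Omega> x" for x
      by blast
    have "ennreal (r powr E) * (\<integral>\<^sup>+ t\<in>{tt - 2 * r\<^sup>2 .. tt - r\<^sup>2}.
          (\<integral>\<^sup>+ x\<in>frontier \<Omega> \<inter> ball xt r. ennreal ((norm (gu x t))\<^sup>2) \<partial>surface_measure) \<partial>lborel)
        \<le> ennreal K * (\<integral>\<^sup>+ t\<in>{tt - \<delta>\<^sup>2 .. tt}. B_plus \<Omega> p gu xh tt t \<partial>lborel)"
      unfolding E_def K_def using assms \<open>K > 0\<close> \<open>0 < r\<close>
      by (intro nn_set_integral_cmult_mono boundary_integral_le_B_plus near)
         (auto simp: K_def)
    also have "\<dots> \<le> ennreal K * (SUP xt\<in>\<Omega>. \<integral>\<^sup>+ t\<in>{tt - \<delta>\<^sup>2 .. tt}. B_plus \<Omega> p gu xt tt t \<partial>lborel)"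
      using \<open>xh \<in> \<Omega>\<close> by (intro mult_left_mono SUP_upper) auto
    finally show ?thesis .
  qed simp
  then show ?thesis
    unfolding beta_def E_def[symmetric] K_def[symmetric] SUP_mult_left_ennreal
    by (blast intro: SUP_least)
qed

lemma SUP_beta_le_B_plus_integral:
  fixes \<Omega> :: "'a::euclidean_space set"
  assumes "1 < p" "0 < c" "0 < A" "\<delta> \<le> r0 / A"
    and visible: "\<And>r. 0 < r \<Longrightarrow> A * r < r0 \<Longrightarrow> boundary_visible_at_scale \<Omega> A c r"
  shows "(SUP r \<in> {0<..<\<delta> / sqrt 2}. beta \<Omega> p gu tt r)
           \<le> ennreal (2 powr (real DIM('a) / 2) * exp (A\<^sup>2 / 4) / c) *
             (SUP xt\<in>\<Omega>. \<integral>\<^sup>+ t\<in>{tt - \<delta>\<^sup>2 .. tt}. B_plus \<Omega> p gu xt tt t \<partial>lborel)"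
proof (rule SUP_least)
  fix r assume "r \<in> {0<..<\<delta> / sqrt 2}"
  then have "0 < r" and r: "sqrt 2 * r < \<delta>" by (auto simp: field_simps)
  then have "2 * r\<^sup>2 \<le> \<delta>\<^sup>2" using power_strict_mono[OF r, of 2] by (simp add: power_mult_distrib)
  have "r \<le> sqrt 2 * r" using \<open>0 < r\<close> by simp
  then have "A * r < A * \<delta>" using r \<open>0 < A\<close> by simp
  moreover have "A * \<delta> \<le> r0" using \<open>0 < A\<close> \<open>\<delta> \<le> r0 / A\<close> by (simp add: field_simps)
  ultimately have "A * r < r0" by linarith
  then show "beta \<Omega> p gu tt r \<le> ennreal (2 powr (real DIM('a) / 2) * exp (A\<^sup>2 / 4) / c) *
      (SUP xt\<in>\<Omega>. \<integral>\<^sup>+ t\<in>{tt - \<delta>\<^sup>2 .. tt}. B_plus \<Omega> p gu xt tt t \<partial>lborel)"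
    using assms \<open>0 < r\<close> \<open>2 * r\<^sup>2 \<le> \<delta>\<^sup>2\<close> by (intro beta_le_B_plus_integral) auto
qed

theorem lemma2p3:
  fixes \<Omega> :: "'a::euclidean_space set" and p \<alpha> :: real
  assumes "1 < p" and "0 < \<alpha>" and "\<alpha> < 1" and "unif_C2alpha_domain \<alpha> \<Omega>"
  shows "\<exists>C>0. \<forall>T>0. \<exists>\<delta>. 0 < \<delta> \<and> \<delta> < sqrt (T / 2) \<and>
           (\<forall>u0 u gu hu ut tt. classical_solution \<Omega> p T u0 u gu hu ut \<and> T / 2 < tt \<and> tt < T \<longrightarrow>
              (SUP r \<in> {0<..<\<delta> / sqrt 2}. beta \<Omega> p gu tt r)
                \<le> ennreal C * (SUP xt \<in> \<Omega>. \<integral>\<^sup>+ t\<in>{tt - \<delta>\<^sup>2 .. tt}. B_plus \<Omega> p gu xt tt t \<partial>lborel))"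
proof -
  obtain r0 M where "0 < r0" "0 \<le> M" and visible:
    "\<And>r. 0 < r \<Longrightarrow> (2 * M + 5) * r < r0 \<Longrightarrow> boundary_visible_at_scale \<Omega> (2 * M + 5) (1 / (1 + M)) r"
    using unif_C2alpha_domain_boundary_visible[OF \<open>unif_C2alpha_domain \<alpha> \<Omega>\<close>] by blast
  define A where "A = 2 * M + 5"
  define c where "c = 1 / (1 + M)"
  have "0 < A" "0 < c" using \<open>0 \<le> M\<close> by (simp_all add: A_def c_def)
  show ?thesis
  proof (rule exI[of _ "2 powr (real DIM('a) / 2) * exp (A\<^sup>2 / 4) / c"], intro conjI allI impI)
    fix T :: real assume "0 < T"
    define \<delta> where "\<delta> = min (sqrt (T / 2) / 2) (r0 / A)"
    have "0 < \<delta>" "\<delta> < sqrt (T / 2)" "\<delta> \<le> r0 / A"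
      using \<open>0 < T\<close> \<open>0 < r0\<close> \<open>0 < A\<close> by (auto simp: \<delta>_def min_less_iff_disj)
    then show "\<exists>\<delta>. 0 < \<delta> \<and> \<delta> < sqrt (T / 2) \<and>
           (\<forall>u0 u gu hu ut tt. classical_solution \<Omega> p T u0 u gu hu ut \<and> T / 2 < tt \<and> tt < T \<longrightarrow>
              (SUP r \<in> {0<..<\<delta> / sqrt 2}. beta \<Omega> p gu tt r)
                \<le> ennreal (2 powr (real DIM('a) / 2) * exp (A\<^sup>2 / 4) / c) *
                  (SUP xt \<in> \<Omega>. \<integral>\<^sup>+ t\<in>{tt - \<delta>\<^sup>2 .. tt}. B_plus \<Omega> p gu xt tt t \<partial>lborel))"
      using \<open>1 < p\<close> \<open>0 < A\<close> \<open>0 < c\<close> visible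
      by (intro exI[of _ \<delta>] conjI allI impI SUP_beta_le_B_plus_integral) (auto simp: A_def c_def)
  qed (use \<open>0 < c\<close> in simp)
qed

end
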